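(* Let $E$ be a dark minimal ceer, and let $R$ be an arbitrary equivalence relation on $\omega$ such that $R$ has infinitely many equivalence classes and $R\supseteq E$. Then $R$ is minimal.
   Context: All equivalence relations have domain $\omega$. For equivalence relations $R,S$, $R\leq_c S$ means there is a computable function $f$ with $xRy\Leftrightarrow f(x)Sf(y)$ for all $x,y$; $R\equiv_c S$ means $R\leq_c S$ and $S\leq_c R$. $\mathrm{Id}$ is the identity relation on $\omega$, and for $n\geq1$, $\mathrm{Id}_n$ is the relation $x\,\mathrm{Id}_n\,y\Leftrightarrow n\mid(x-y)$. A ceer is a computably enumerable equivalence relation. A ceer is dark if it is $\leq_c$-incomparable with $\mathrm{Id}$. An equivalence relation $R$ is minimal if it has infinitely many classes and for every equivalence relation $S$, $S\leq_c R$ implies $S\equiv_c R$ or $S\equiv_c\mathrm{Id}_n$ for some $n$. *)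

theory Defs
  imports Main "HOL-Library.Nat_Bijection"
begin

datatype recf = Z | Sc | Proj nat | Cn recf "recf list" | Pr recf recf | Mn recf

text \<open>eval c xs y: the program c on argument list xs halts with output y.
  Arities are not tracked (surplus arguments are ignored); this yields exactly
  the partial recursive functions.\<close>
inductive eval :: "recf \<Rightarrow> nat list \<Rightarrow> nat \<Rightarrow> bool" where
  eval_Z: "eval Z xs 0"
| eval_S: "eval Sc (x # xs) (Suc x)"
| eval_Proj: "i < length xs \<Longrightarrow> eval (Proj i) xs (xs ! i)"
| eval_Cn: "list_all2 (\<lambda>g y. eval g xs y) gs ys \<Longrightarrow> eval f ys z \<Longrightarrow> eval (Cn f gs) xs z"
| eval_Pr0: "eval f xs y \<Longrightarrow> eval (Pr f g) (0 # xs) y"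
| eval_PrS: "eval (Pr f g) (n # xs) y \<Longrightarrow> eval g (n # y # xs) z \<Longrightarrow> eval (Pr f g) (Suc n # xs) z"
| eval_Mn: "eval f (n # xs) 0 \<Longrightarrow> (\<forall>m<n. \<exists>k. eval f (m # xs) (Suc k)) \<Longrightarrow> eval (Mn f) xs n"

definition computable :: "(nat \<Rightarrow> nat) \<Rightarrow> bool" where
  "computable f \<longleftrightarrow> (\<exists>c. \<forall>x. eval c [x] (f x))"

definition ce_set :: "nat set \<Rightarrow> bool" where
  "ce_set A \<longleftrightarrow> (\<exists>c. \<forall>x. x \<in> A \<longleftrightarrow> (\<exists>y. eval c [x] y))"

definition ceer :: "(nat \<Rightarrow> nat \<Rightarrow> bool) \<Rightarrow> bool" where
  "ceer R \<longleftrightarrow> equivp R \<and> ce_set {prod_encode (x, y) | x y. R x y}"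

definition creduce :: "(nat \<Rightarrow> nat \<Rightarrow> bool) \<Rightarrow> (nat \<Rightarrow> nat \<Rightarrow> bool) \<Rightarrow> bool" (infix "\<le>\<^sub>c" 50) where
  "R \<le>\<^sub>c S \<longleftrightarrow> (\<exists>f. computable f \<and> (\<forall>x y. R x y \<longleftrightarrow> S (f x) (f y)))"

definition cequiv :: "(nat \<Rightarrow> nat \<Rightarrow> bool) \<Rightarrow> (nat \<Rightarrow> nat \<Rightarrow> bool) \<Rightarrow> bool" (infix "\<equiv>\<^sub>c" 50) where
  "R \<equiv>\<^sub>c S \<longleftrightarrow> R \<le>\<^sub>c S \<and> S \<le>\<^sub>c R"

definition IdR :: "nat \<Rightarrow> nat \<Rightarrow> bool" where
  "IdR x y \<longleftrightarrow> x = y"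

definition IdN :: "nat \<Rightarrow> nat \<Rightarrow> nat \<Rightarrow> bool" where
  "IdN n x y \<longleftrightarrow> int n dvd (int x - int y)"

definition inf_classes :: "(nat \<Rightarrow> nat \<Rightarrow> bool) \<Rightarrow> bool" where
  "inf_classes R \<longleftrightarrow> infinite (UNIV // {(x, y). R x y})"

definition dark :: "(nat \<Rightarrow> nat \<Rightarrow> bool) \<Rightarrow> bool" where
  "dark R \<longleftrightarrow> ceer R \<and> \<not> R \<le>\<^sub>c IdR \<and> \<not> IdR \<le>\<^sub>c R"

definition minimal_er :: "(nat \<Rightarrow> nat \<Rightarrow> bool) \<Rightarrow> bool" where
  "minimal_er R \<longleftrightarrow> inf_classes R \<and>
     (\<forall>T. equivp T \<longrightarrow> T \<le>\<^sub>c R \<longrightarrow> T \<equiv>\<^sub>c R \<or> (\<exists>n\<ge>1. T \<equiv>\<^sub>c IdN n))"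

end

theory Submission
  imports Defs
begin

text \<open>
  Let \<open>T \<le>\<^sub>c R\<close> via \<open>f\<close>. The pullback \<open>E\<^sub>f x y = E (f x) (f y)\<close> reduces to \<open>E\<close>,
  so by minimality of \<open>E\<close> either \<open>E\<^sub>f \<equiv>\<^sub>c E\<close> or \<open>E\<^sub>f \<equiv>\<^sub>c Id\<^sub>n\<close>.

  In the first case a reduction \<open>g\<close> of \<open>E\<close> to \<open>E\<^sub>f\<close> makes \<open>f \<circ> g\<close> a computable
  self-reduction of \<open>E\<close>. Its range meets every \<open>E\<close>-class, since otherwise the orbit of a
  missed point would reduce \<open>Id\<close> to \<open>E\<close>, contradicting darkness. As \<open>E\<close> is c.e., a
  dovetailed search then computes \<open>k\<close> with \<open>E (f (g (k y))) y\<close>, and since \<open>E \<subseteq> R\<close>,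
  \<open>g \<circ> k\<close> reduces \<open>R\<close> to \<open>T\<close>.

  In the second case \<open>T\<close> contains \<open>E\<^sub>f\<close> (as \<open>E \<subseteq> R\<close>), so it has finitely many
  classes, which are unions of classes of \<open>x \<mapsto> u x mod n\<close> for a computable \<open>u\<close>; hence
  \<open>T \<equiv>\<^sub>c Id\<^sub>m\<close> for the number \<open>m\<close> of its classes.

  The search needs a decidable approximation of the c.e. relation \<open>E\<close>; it comes from an
  evaluator for \<open>recf\<close> programs that bounds every unbounded search and is itself computable.
\<close>

section \<open>Total recursive functions on argument lists\<close>

definition total_recursive :: "nat \<Rightarrow> (nat list \<Rightarrow> nat) \<Rightarrow> bool" where
  "total_recursive k F \<longleftrightarrow> (\<exists>c. \<forall>xs. length xs = k \<longrightarrow> eval c xs (F xs))"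

lemma total_recursive_cong:
  "total_recursive k F \<Longrightarrow> (\<And>xs. length xs = k \<Longrightarrow> F xs = G xs) \<Longrightarrow> total_recursive k G"
  unfolding total_recursive_def by metis

lemma computable_iff_total_recursive: "computable f \<longleftrightarrow> total_recursive 1 (\<lambda>xs. f (xs ! 0))"
proof -
  have "(\<forall>x. eval c [x] (f x)) \<longleftrightarrow> (\<forall>xs. length xs = 1 \<longrightarrow> eval c xs (f (xs ! 0)))" for c
    by (metis One_nat_def length_Cons list.size(3) nth_Cons_0 length_Suc_conv length_0_conv)
  then show ?thesis unfolding computable_def total_recursive_def by simp
qed

fun const_prog :: "nat \<Rightarrow> recf" where
  "const_prog 0 = Z"
| "const_prog (Suc a) = Cn Sc [const_prog a]"

lemma eval_const_prog: "eval (const_prog a) xs a"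
  by (induction a) (auto intro: eval_Z eval_Cn[where ys = "[_]"] eval_S)

lemma total_recursive_const [intro]: "total_recursive k (\<lambda>_. a)"
  unfolding total_recursive_def using eval_const_prog by blast

lemma total_recursive_proj [intro]: "i < k \<Longrightarrow> total_recursive k (\<lambda>xs. xs ! i)"
  unfolding total_recursive_def using eval_Proj by metis

lemma total_recursive_comp:
  assumes "total_recursive (length Gs) F" "\<And>G. G \<in> set Gs \<Longrightarrow> total_recursive k G"
  shows "total_recursive k (\<lambda>xs. F (map (\<lambda>G. G xs) Gs))"
proof -
  have "\<exists>cs. list_all2 (\<lambda>c G. \<forall>xs. length xs = k \<longrightarrow> eval c xs (G xs)) cs Gs"
    using assms(2)
  proof (induction Gs)
    case (Cons G Gs)
    then obtain cs where "list_all2 (\<lambda>c G. \<forall>xs. length xs = k \<longrightarrow> eval c xs (G xs)) cs Gs"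
      by auto
    moreover obtain c where "\<forall>xs. length xs = k \<longrightarrow> eval c xs (G xs)"
      using Cons.prems unfolding total_recursive_def by auto
    ultimately show ?case by (auto intro!: exI[of _ "c # cs"])
  qed simp
  then obtain cs where cs: "list_all2 (\<lambda>c G. \<forall>xs. length xs = k \<longrightarrow> eval c xs (G xs)) cs Gs" ..
  obtain cf where cf: "\<forall>ys. length ys = length Gs \<longrightarrow> eval cf ys (F ys)"
    using assms(1) unfolding total_recursive_def by blast
  have "eval (Cn cf cs) xs (F (map (\<lambda>G. G xs) Gs))" if "length xs = k" for xs
  proof (rule eval_Cn)
    show "list_all2 (\<lambda>g y. eval g xs y) cs (map (\<lambda>G. G xs) Gs)"
      using cs that by (auto simp: list_all2_conv_all_nth)
  qed (use cf in simp)
  then show ?thesis unfolding total_recursive_def by blast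
qed

lemma total_recursive_comp1:
  "total_recursive 1 F \<Longrightarrow> total_recursive k A \<Longrightarrow> total_recursive k (\<lambda>xs. F [A xs])"
  using total_recursive_comp[of "[A]" F k] by simp

lemma total_recursive_comp2:
  "total_recursive 2 F \<Longrightarrow> total_recursive k A \<Longrightarrow> total_recursive k B \<Longrightarrow>
    total_recursive k (\<lambda>xs. F [A xs, B xs])"
  using total_recursive_comp[of "[A, B]" F k] by (auto simp: numeral_2_eq_2)

lemma total_recursive_comp_drop:
  assumes "total_recursive (length Gs + m) F" "\<And>G. G \<in> set Gs \<Longrightarrow> total_recursive k G"
    and "d + m = k"
  shows "total_recursive k (\<lambda>xs. F (map (\<lambda>G. G xs) Gs @ drop d xs))"
proof -
  let ?Ps = "map (\<lambda>i xs. xs ! (i + d)) [0..<m]"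
  have "total_recursive k (\<lambda>xs. F (map (\<lambda>G. G xs) (Gs @ ?Ps)))"
    using assms by (intro total_recursive_comp) auto
  then show ?thesis
  proof (rule total_recursive_cong)
    fix xs :: "nat list" assume "length xs = k"
    then have "map (\<lambda>i. xs ! (i + d)) [0..<m] = drop d xs"
      using assms(3) by (intro nth_equalityI) (auto simp: add.commute)
    then show "F (map (\<lambda>G. G xs) (Gs @ ?Ps)) = F (map (\<lambda>G. G xs) Gs @ drop d xs)"
      by (simp add: comp_def)
  qed
qed

lemma total_recursive_Suc [intro]:
  assumes "total_recursive k A"
  shows "total_recursive k (\<lambda>xs. Suc (A xs))"
proof -
  have "total_recursive 1 (\<lambda>xs. Suc (xs ! 0))"
    unfolding total_recursive_def
    by (metis One_nat_def eval_S length_Suc_conv length_0_conv nth_Cons_0)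
  from total_recursive_comp1[OF this assms] show ?thesis by simp
qed

lemma total_recursive_prim_rec:
  assumes "total_recursive k F" "total_recursive (Suc (Suc k)) G"
    and "\<And>ys. length ys = k \<Longrightarrow> H (0 # ys) = F ys"
    and "\<And>n ys. length ys = k \<Longrightarrow> H (Suc n # ys) = G (n # H (n # ys) # ys)"
  shows "total_recursive (Suc k) H"
proof -
  obtain cf where cf: "\<forall>ys. length ys = k \<longrightarrow> eval cf ys (F ys)"
    using assms(1) unfolding total_recursive_def by blast
  obtain cg where cg: "\<forall>zs. length zs = Suc (Suc k) \<longrightarrow> eval cg zs (G zs)"
    using assms(2) unfolding total_recursive_def by blast
  have "eval (Pr cf cg) (n # ys) (H (n # ys))" if "length ys = k" for n ys
    by (induction n) (use that cf cg assms(3,4) in \<open>auto intro: eval_Pr0 eval_PrS\<close>)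
  then show ?thesis unfolding total_recursive_def by (metis length_Suc_conv)
qed

lemma total_recursive_minimize:
  assumes "total_recursive (Suc k) P" and "\<And>xs. length xs = k \<Longrightarrow> \<exists>n. P (n # xs) = 0"
  shows "total_recursive k (\<lambda>xs. LEAST n. P (n # xs) = 0)"
proof -
  obtain c where c: "\<forall>xs. length xs = Suc k \<longrightarrow> eval c xs (P xs)"
    using assms(1) unfolding total_recursive_def by blast
  have "eval (Mn c) xs (LEAST n. P (n # xs) = 0)" if "length xs = k" for xs
  proof (rule eval_Mn)
    have cn: "eval c (n # xs) (P (n # xs))" for n
      using c that by simp
    show "eval c ((LEAST n. P (n # xs) = 0) # xs) 0"
      using cn LeastI_ex[OF assms(2)[OF that]] by metis
    show "\<forall>m<(LEAST n. P (n # xs) = 0). \<exists>j. eval c (m # xs) (Suc j)"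
      using cn not_less_Least not0_implies_Suc by metis
  qed
  then show ?thesis unfolding total_recursive_def by blast
qed

lemma total_recursive_add [intro]:
  assumes "total_recursive k A" "total_recursive k B"
  shows "total_recursive k (\<lambda>xs. A xs + B xs)"
proof -
  have "total_recursive 2 (\<lambda>xs. xs ! 0 + xs ! 1)"
    unfolding numeral_2_eq_2
    by (rule total_recursive_prim_rec[where F = "\<lambda>ys. ys ! 0" and G = "\<lambda>zs. Suc (zs ! 1)"]) auto
  from total_recursive_comp2[OF this assms] show ?thesis by simp
qed

lemma total_recursive_mult [intro]:
  assumes "total_recursive k A" "total_recursive k B"
  shows "total_recursive k (\<lambda>xs. A xs * B xs)"
proof -
  have "total_recursive 2 (\<lambda>xs. xs ! 0 * xs ! 1)"
    unfolding numeral_2_eq_2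
    by (rule total_recursive_prim_rec[where F = "\<lambda>_. 0" and G = "\<lambda>zs. zs ! 1 + zs ! 2"])
      (auto intro!: total_recursive_add)
  from total_recursive_comp2[OF this assms] show ?thesis by simp
qed

lemma total_recursive_diff [intro]:
  assumes "total_recursive k A" "total_recursive k B"
  shows "total_recursive k (\<lambda>xs. A xs - B xs)"
proof -
  have "total_recursive 1 (\<lambda>xs. xs ! 0 - 1)"
    unfolding One_nat_def
    by (rule total_recursive_prim_rec[where F = "\<lambda>_. 0" and G = "\<lambda>zs. zs ! 0"]) auto
  from total_recursive_comp1[OF this total_recursive_proj[of 1 "Suc (Suc 1)"]]
  have pred: "total_recursive (Suc (Suc 1)) (\<lambda>zs. zs ! 1 - 1)" by simp
  have "total_recursive 2 (\<lambda>xs. xs ! 1 - xs ! 0)"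
    unfolding numeral_2_eq_2
    by (rule total_recursive_prim_rec[where F = "\<lambda>ys. ys ! 0", OF _ pred[unfolded One_nat_def]])
      auto
  from total_recursive_comp2[OF this assms(2,1)] show ?thesis by simp
qed

lemma total_recursive_If [intro]:
  assumes "total_recursive k A" "total_recursive k B" "total_recursive k C"
  shows "total_recursive k (\<lambda>xs. if A xs = 0 then B xs else C xs)"
proof -
  have "total_recursive k (\<lambda>xs. (1 - A xs) * B xs + (1 - (1 - A xs)) * C xs)"
    using assms by (intro total_recursive_add total_recursive_mult total_recursive_diff) auto
  then show ?thesis by (rule total_recursive_cong) simp
qed

lemma total_recursive_prod_encode [intro]:
  assumes "total_recursive k A" "total_recursive k B"
  shows "total_recursive k (\<lambda>xs. prod_encode (A xs, B xs))"
proof -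
  have "total_recursive (Suc 0) (\<lambda>xs. triangle (xs ! 0))"
    by (rule total_recursive_prim_rec[where F = "\<lambda>_. 0" and G = "\<lambda>zs. zs ! 1 + Suc (zs ! 0)"])
      (auto intro!: total_recursive_add total_recursive_Suc)
  from total_recursive_comp1[OF this[folded One_nat_def] total_recursive_add[OF assms]]
  have "total_recursive k (\<lambda>xs. triangle (A xs + B xs) + A xs)"
    by (intro total_recursive_add assms) simp
  then show ?thesis by (simp add: prod_encode_def)
qed

lemma total_recursive_computable:
  "computable f \<Longrightarrow> total_recursive k A \<Longrightarrow> total_recursive k (\<lambda>xs. f (A xs))"
  using total_recursive_comp1[of "\<lambda>xs. f (xs ! 0)"] by (simp add: computable_iff_total_recursive)

lemma computable_comp:
  assumes "computable f" "computable g"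
  shows "computable (\<lambda>x. f (g x))"
  using total_recursive_computable[OF assms(1) assms(2)[unfolded computable_iff_total_recursive]]
  by (simp add: computable_iff_total_recursive)

lemma computable_mod_lookup:
  assumes "n > 0"
  shows "computable (\<lambda>x. t (x mod n))"
proof -
  have lookup: "total_recursive 1 (\<lambda>xs. if xs ! 0 < N then t (xs ! 0) else 0)" for N
  proof (induction N)
    case (Suc N)
    have "total_recursive 1 (\<lambda>xs. if (xs ! 0 - N) + (N - xs ! 0) = 0 then t N
        else if xs ! 0 < N then t (xs ! 0) else 0)"
      using Suc by (intro total_recursive_If total_recursive_add total_recursive_diff) auto
    then show ?case by (rule total_recursive_cong) (auto simp: le_less_Suc_eq)
  qed (simp add: total_recursive_const)
  have mod_bound: "Suc (m mod n) \<le> n" for m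
    using assms by (simp add: Suc_le_eq)
  have "total_recursive (Suc 0) (\<lambda>xs. xs ! 0 mod n)"
  proof (rule total_recursive_prim_rec[where F = "\<lambda>_. 0"])
    show "total_recursive (Suc (Suc 0)) (\<lambda>zs. if n - Suc (zs ! 1) = 0 then 0 else Suc (zs ! 1))"
      by (intro total_recursive_If total_recursive_diff total_recursive_Suc) auto
  qed (use mod_bound in \<open>auto simp: mod_Suc le_antisym\<close>)
  from total_recursive_comp1[OF lookup[of n] this[folded One_nat_def]]
  show ?thesis using assms by (simp add: computable_iff_total_recursive)
qed

lemma computable_funpow_orbit:
  assumes "computable h"
  shows "computable (\<lambda>i. (h ^^ i) a)"
proof -
  have "total_recursive (Suc 0) (\<lambda>xs. (h ^^ (xs ! 0)) a)"
    by (rule total_recursive_prim_rec[where F = "\<lambda>_. a" and G = "\<lambda>zs. h (zs ! 1)"])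
      (auto intro: total_recursive_computable[OF assms])
  then show ?thesis by (simp add: computable_iff_total_recursive)
qed

section \<open>Evaluation with bounded search\<close>

fun prim_rec_opt ::
  "(nat list \<Rightarrow> nat option) \<Rightarrow> (nat list \<Rightarrow> nat option) \<Rightarrow> nat \<Rightarrow> nat list \<Rightarrow> nat option" where
  "prim_rec_opt F G 0 xs = F xs"
| "prim_rec_opt F G (Suc n) xs =
    (case prim_rec_opt F G n xs of None \<Rightarrow> None | Some y \<Rightarrow> G (n # y # xs))"

text \<open>State of the search for the least zero of \<open>F\<close> after testing the arguments below \<open>j\<close>:
  \<open>0\<close> while all tested values are positive, \<open>1\<close> once a tested value is undefined,
  \<open>m + 2\<close> once \<open>m\<close> is found to be the least zero.\<close>
fun search_state :: "(nat \<Rightarrow> nat option) \<Rightarrow> nat \<Rightarrow> nat" where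
  "search_state F 0 = 0"
| "search_state F (Suc j) =
    (if search_state F j \<noteq> 0 then search_state F j
     else case F j of None \<Rightarrow> 1 | Some 0 \<Rightarrow> j + 2 | Some (Suc _) \<Rightarrow> 0)"

text \<open>Evaluation in which every unbounded search may only test arguments below \<open>s\<close>.\<close>
fun eval_bounded :: "nat \<Rightarrow> recf \<Rightarrow> nat list \<Rightarrow> nat option" where
  "eval_bounded s Z xs = Some 0"
| "eval_bounded s Sc xs = (case xs of [] \<Rightarrow> None | x # _ \<Rightarrow> Some (Suc x))"
| "eval_bounded s (Proj i) xs = (if i < length xs then Some (xs ! i) else None)"
| "eval_bounded s (Cn f gs) xs =
    (if None \<notin> set (map (\<lambda>g. eval_bounded s g xs) gs)
     then eval_bounded s f (map (\<lambda>g. the (eval_bounded s g xs)) gs) else None)"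
| "eval_bounded s (Pr f g) xs =
    (case xs of [] \<Rightarrow> None | n # ys \<Rightarrow> prim_rec_opt (eval_bounded s f) (eval_bounded s g) n ys)"
| "eval_bounded s (Mn f) xs =
    (let st = search_state (\<lambda>m. eval_bounded s f (m # xs)) s
     in if 2 \<le> st then Some (st - 2) else None)"

lemma search_state_zero:
  "search_state F j = 0 \<Longrightarrow> m < j \<Longrightarrow> \<exists>k. F m = Some (Suc k)"
  by (induction j) (auto simp: less_Suc_eq split: if_splits option.splits nat.splits)

lemma search_state_found:
  "search_state F s = j + 2 \<Longrightarrow> j < s \<and> F j = Some 0 \<and> (\<forall>m<j. \<exists>k. F m = Some (Suc k))"
proof (induction s)
  case (Suc s)
  show ?case
  proof (cases "search_state F s = 0")
    case True
    then show ?thesis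
      using Suc.prems search_state_zero[OF True] by (auto split: option.splits nat.splits)
  qed (use Suc in auto)
qed simp

lemma search_state_eq_if_found:
  assumes "j < s" "F j = Some 0" "\<forall>m<j. \<exists>k. F m = Some (Suc k)"
  shows "search_state F s = j + 2"
proof -
  have "search_state F i = 0" if "i \<le> j" for i
    using that by (induction i) (use assms(3) in \<open>auto simp: Suc_le_eq\<close>)
  then have "search_state F (Suc j + d) = j + 2" for d
    using assms(2) by (induction d) auto
  from this[of "s - Suc j"] show ?thesis using assms(1) by simp
qed

lemma eval_prim_rec_opt:
  assumes "\<And>ys y. F ys = Some y \<Longrightarrow> eval f ys y" "\<And>ys y. G ys = Some y \<Longrightarrow> eval g ys y"
  shows "prim_rec_opt F G n ys = Some y \<Longrightarrow> eval (Pr f g) (n # ys) y"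
proof (induction n arbitrary: y)
  case (Suc n)
  then show ?case using assms(2) by (auto split: option.splits intro: eval_PrS)
qed (use assms(1) in \<open>auto intro: eval_Pr0\<close>)

lemma prim_rec_opt_mono:
  assumes "\<And>ys y. F ys = Some y \<Longrightarrow> F' ys = Some y" "\<And>ys y. G ys = Some y \<Longrightarrow> G' ys = Some y"
  shows "prim_rec_opt F G n ys = Some y \<Longrightarrow> prim_rec_opt F' G' n ys = Some y"
  by (induction n arbitrary: y) (use assms in \<open>auto split: option.splits\<close>)

lemma eval_bounded_sound: "eval_bounded s c xs = Some y \<Longrightarrow> eval c xs y"
proof (induction c arbitrary: xs y)
  case (Cn f gs)
  let ?ys = "map (\<lambda>g. the (eval_bounded s g xs)) gs"
  have "None \<notin> (\<lambda>g. eval_bounded s g xs) ` set gs"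
    using Cn.prems by (auto split: if_splits)
  then have "eval g xs (the (eval_bounded s g xs))" if "g \<in> set gs" for g
    using Cn.IH(2)[OF that] that by (metis image_eqI option.collapse)
  then have "list_all2 (\<lambda>g y. eval g xs y) gs ?ys"
    by (auto simp: list_all2_conv_all_nth)
  moreover have "eval f ?ys y"
    using Cn by (auto split: if_splits)
  ultimately show ?case by (rule eval_Cn)
next
  case (Pr f g)
  then show ?case using eval_prim_rec_opt[OF Pr.IH] by (auto split: list.splits)
next
  case (Mn f)
  then have "search_state (\<lambda>m. eval_bounded s f (m # xs)) s = y + 2"
    by (auto simp: Let_def split: if_splits)
  from search_state_found[OF this] show ?case
    using Mn.IH by (intro eval_Mn) blast+
qed (auto split: list.splits if_splits intro: eval_Z eval_S eval_Proj)

lemma eval_bounded_mono: "eval_bounded s c xs = Some y \<Longrightarrow> s \<le> s' \<Longrightarrow> eval_bounded s' c xs = Some y"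
proof (induction c arbitrary: xs y)
  case (Cn f gs)
  have "None \<notin> (\<lambda>g. eval_bounded s g xs) ` set gs"
    using Cn.prems by (auto split: if_splits)
  then have "eval_bounded s' g xs = eval_bounded s g xs" if "g \<in> set gs" for g
    using Cn.IH(2)[OF that _ Cn.prems(2)] that by (metis image_eqI option.collapse)
  then have args: "map (\<lambda>g. eval_bounded s' g xs) gs = map (\<lambda>g. eval_bounded s g xs) gs"
    and vals: "map (\<lambda>g. the (eval_bounded s' g xs)) gs = map (\<lambda>g. the (eval_bounded s g xs)) gs"
    by simp_all
  show ?case
    using Cn.prems Cn.IH(1) unfolding eval_bounded.simps args vals by (auto split: if_splits)
next
  case (Pr f g)
  show ?case
    using prim_rec_opt_mono[OF Pr.IH(1)[OF _ Pr.prems(2)] Pr.IH(2)[OF _ Pr.prems(2)]] Pr.prems(1)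
    by (auto split: list.splits)
next
  case (Mn f)
  then have "search_state (\<lambda>m. eval_bounded s f (m # xs)) s = y + 2"
    by (auto simp: Let_def split: if_splits)
  from search_state_found[OF this]
  have "search_state (\<lambda>m. eval_bounded s' f (m # xs)) s' = y + 2"
    using Mn.IH Mn.prems(2) by (intro search_state_eq_if_found) auto
  then show ?case by simp
qed auto

lemma ex_common_bound:
  fixes P :: "nat \<Rightarrow> nat \<Rightarrow> bool"
  assumes "\<forall>m<n. \<exists>s. P m s" and "\<And>m s s'. P m s \<Longrightarrow> s \<le> s' \<Longrightarrow> P m s'"
  shows "\<exists>S. \<forall>m<n. P m S"
proof -
  obtain b where b: "\<forall>m<n. P m (b m)"
    using assms(1) by metis
  have "P m (\<Sum>i<n. b i)" if "m < n" for m
    using b that assms(2) by (meson finite_lessThan lessThan_iff member_le_sum zero_le)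
  then show ?thesis by blast
qed

lemma eval_bounded_complete: "eval c xs y \<Longrightarrow> \<exists>s. eval_bounded s c xs = Some y"
proof (induction rule: eval.induct)
  case (eval_Cn xs gs ys f z)
  have "\<forall>i<length gs. \<exists>s. eval_bounded s (gs ! i) xs = Some (ys ! i)"
    using eval_Cn.IH(1) by (simp add: list_all2_conv_all_nth)
  then have "\<exists>S. \<forall>i<length gs. eval_bounded S (gs ! i) xs = Some (ys ! i)"
    by (rule ex_common_bound) (metis eval_bounded_mono)
  then obtain s1 where s1: "\<forall>i<length gs. eval_bounded s1 (gs ! i) xs = Some (ys ! i)" ..
  obtain s2 where s2: "eval_bounded s2 f ys = Some z"
    using eval_Cn.IH(2) by blast
  define s where "s = max s1 s2"
  have "map (\<lambda>g. eval_bounded s g xs) gs = map Some ys"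
  proof (rule nth_equalityI)
    show "length (map (\<lambda>g. eval_bounded s g xs) gs) = length (map Some ys)"
      using eval_Cn.IH(1) by (simp add: list_all2_lengthD)
    fix i assume "i < length (map (\<lambda>g. eval_bounded s g xs) gs)"
    then have "eval_bounded s1 (gs ! i) xs = Some (ys ! i)" and "i < length gs" "i < length ys"
      using s1 eval_Cn.IH(1) by (simp_all add: list_all2_lengthD)
    from eval_bounded_mono[OF this(1), of s] this(2,3)
    show "map (\<lambda>g. eval_bounded s g xs) gs ! i = map Some ys ! i"
      by (simp add: s_def)
  qed
  moreover from arg_cong[OF this, of "map the"]
  have "map (\<lambda>g. the (eval_bounded s g xs)) gs = ys"
    by (simp add: comp_def)
  ultimately have "eval_bounded s (Cn f gs) xs = Some z"
    using eval_bounded_mono[OF s2, of s] by (simp add: s_def)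
  then show ?case by blast
next
  case (eval_PrS f g n xs y z)
  then obtain s1 s2 where s1: "eval_bounded s1 (Pr f g) (n # xs) = Some y"
    and s2: "eval_bounded s2 g (n # y # xs) = Some z"
    by blast
  have "eval_bounded (max s1 s2) (Pr f g) (n # xs) = Some y"
    and "eval_bounded (max s1 s2) g (n # y # xs) = Some z"
    using eval_bounded_mono[OF s1] eval_bounded_mono[OF s2] by simp_all
  then have "eval_bounded (max s1 s2) (Pr f g) (Suc n # xs) = Some z"
    by simp
  then show ?case by blast
next
  case (eval_Mn f n xs)
  obtain s0 where s0: "eval_bounded s0 f (n # xs) = Some 0"
    using eval_Mn.IH(1) by blast
  have "\<forall>m<n. \<exists>s k. eval_bounded s f (m # xs) = Some (Suc k)"
    using eval_Mn.IH(2) by blast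
  then have "\<exists>S. \<forall>m<n. \<exists>k. eval_bounded S f (m # xs) = Some (Suc k)"
    by (rule ex_common_bound) (metis eval_bounded_mono)
  then obtain S where S: "\<forall>m<n. \<exists>k. eval_bounded S f (m # xs) = Some (Suc k)" ..
  define s where "s = max (max S s0) (Suc n)"
  have "search_state (\<lambda>m. eval_bounded s f (m # xs)) s = n + 2"
  proof (rule search_state_eq_if_found)
    show "n < s" by (simp add: s_def)
    show "eval_bounded s f (n # xs) = Some 0"
      using eval_bounded_mono[OF s0, of s] by (simp add: s_def)
    have "S \<le> s" by (simp add: s_def)
    then show "\<forall>m<n. \<exists>k. eval_bounded s f (m # xs) = Some (Suc k)"
      using S eval_bounded_mono by metis
  qed
  then have "eval_bounded s (Mn f) xs = Some n" by simp
  then show ?case by blast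
qed auto

section \<open>Computability of bounded evaluation\<close>

lemma total_recursive_prod_list:
  "(\<And>g. g \<in> set gs \<Longrightarrow> total_recursive k (F g)) \<Longrightarrow> total_recursive k (\<lambda>xs. \<Prod>g\<leftarrow>gs. F g xs)"
  by (induction gs) (auto intro!: total_recursive_mult)

fun encode_option :: "nat option \<Rightarrow> nat" where
  "encode_option None = 0"
| "encode_option (Some y) = Suc y"

text \<open>The first argument is the search bound; an undefined result is coded as \<open>0\<close>.\<close>
definition eval_bounded_code :: "recf \<Rightarrow> nat list \<Rightarrow> nat" where
  "eval_bounded_code c xs = encode_option (eval_bounded (hd xs) c (tl xs))"

lemma eval_bounded_code_Cons [simp]:
  "eval_bounded_code c (s # xs) = encode_option (eval_bounded s c xs)"
  by (simp add: eval_bounded_code_def)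

lemma encode_option_eq_0_iff [simp]: "encode_option v = 0 \<longleftrightarrow> v = None"
  by (cases v) auto

lemma eval_bounded_code_Cn:
  "eval_bounded_code (Cn f gs) (s # ys) =
    (if (\<Prod>g\<leftarrow>gs. eval_bounded_code g (s # ys)) = 0 then 0
     else eval_bounded_code f (s # map (\<lambda>g. eval_bounded_code g (s # ys) - 1) gs))"
proof -
  have undefined_iff: "(\<Prod>g\<leftarrow>gs. eval_bounded_code g (s # ys)) = 0 \<longleftrightarrow>
      None \<in> set (map (\<lambda>g. eval_bounded s g ys) gs)"
    by (induction gs) auto
  show ?thesis
  proof (cases "None \<in> set (map (\<lambda>g. eval_bounded s g ys) gs)")
    case False
    then have "eval_bounded_code g (s # ys) - 1 = the (eval_bounded s g ys)" if "g \<in> set gs" for g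
      using that by (cases "eval_bounded s g ys") (auto intro: rev_image_eqI)
    then have args: "map (\<lambda>g. eval_bounded_code g (s # ys) - 1) gs =
        map (\<lambda>g. the (eval_bounded s g ys)) gs"
      by (rule map_cong[OF refl])
    show ?thesis
      unfolding args undefined_iff using False by simp
  qed (unfold undefined_iff, simp)
qed

lemma total_recursive_eval_bounded_code_Cn:
  assumes f: "total_recursive (Suc (length gs)) (eval_bounded_code f)"
    and gs: "\<And>g. g \<in> set gs \<Longrightarrow> total_recursive (Suc k) (eval_bounded_code g)"
  shows "total_recursive (Suc k) (eval_bounded_code (Cn f gs))"
proof -
  let ?Gs = "(\<lambda>xs. xs ! 0) # map (\<lambda>g xs. eval_bounded_code g xs - 1) gs"
  have "total_recursive (Suc k) (\<lambda>xs. \<Prod>g\<leftarrow>gs. eval_bounded_code g xs)"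
    using gs by (rule total_recursive_prod_list)
  moreover have "total_recursive (Suc k) (\<lambda>xs. eval_bounded_code f (map (\<lambda>G. G xs) ?Gs))"
    by (rule total_recursive_comp) (use f gs in auto)
  ultimately have "total_recursive (Suc k) (\<lambda>xs. if (\<Prod>g\<leftarrow>gs. eval_bounded_code g xs) = 0 then 0
      else eval_bounded_code f (map (\<lambda>G. G xs) ?Gs))"
    by (intro total_recursive_If total_recursive_const)
  then show ?thesis
    by (rule total_recursive_cong)
      (auto simp: length_Suc_conv eval_bounded_code_Cn comp_def simp del: eval_bounded_code_Cons)
qed

lemma total_recursive_eval_bounded_code_Pr:
  assumes f: "total_recursive (Suc k) (eval_bounded_code f)"
    and g: "total_recursive (Suc (Suc (Suc k))) (eval_bounded_code g)"
  shows "total_recursive (Suc (Suc k)) (eval_bounded_code (Pr f g))"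
proof -
  \<comment> \<open>The recursion variable is moved in front of the search bound, so that \<open>H\<close> is
    defined by primitive recursion on its first argument.\<close>
  define H where "H xs = encode_option
    (prim_rec_opt (eval_bounded (xs ! 1) f) (eval_bounded (xs ! 1) g) (hd xs) (drop 2 xs))" for xs
  let ?Bg = "\<lambda>zs. eval_bounded_code g
    (map (\<lambda>G. G zs) [\<lambda>zs. zs ! 2, \<lambda>zs. zs ! 0, \<lambda>zs. zs ! 1 - 1] @ drop 3 zs)"
  have "total_recursive (Suc (Suc (Suc k))) ?Bg"
    by (rule total_recursive_comp_drop) (use g in auto)
  then have "total_recursive (Suc (Suc (Suc k))) (\<lambda>zs. if zs ! 1 = 0 then 0 else ?Bg zs)"
    by (intro total_recursive_If total_recursive_proj total_recursive_const) auto
  then have H: "total_recursive (Suc (Suc k)) H"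
    by (rule total_recursive_prim_rec[OF f]) (auto simp: H_def length_Suc_conv split: option.split)
  have "total_recursive (Suc (Suc k))
      (\<lambda>xs. H (map (\<lambda>G. G xs) [\<lambda>xs. xs ! 1, \<lambda>xs. xs ! 0] @ drop 2 xs))"
    by (rule total_recursive_comp_drop) (use H in auto)
  then show ?thesis
    by (rule total_recursive_cong) (auto simp: H_def length_Suc_conv)
qed

lemma total_recursive_eval_bounded_code_Mn:
  assumes f: "total_recursive (Suc (Suc k)) (eval_bounded_code f)"
  shows "total_recursive (Suc k) (eval_bounded_code (Mn f))"
proof -
  \<comment> \<open>As for \<open>Pr\<close>, the number of tested arguments comes first, so that \<open>H\<close> is defined
    by primitive recursion.\<close>
  define H where "H xs = search_state (\<lambda>m. eval_bounded (xs ! 1) f (m # drop 2 xs)) (hd xs)" for xs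
  let ?Bf = "\<lambda>zs. eval_bounded_code f (map (\<lambda>G. G zs) [\<lambda>zs. zs ! 2, \<lambda>zs. zs ! 0] @ drop 3 zs)"
  have "total_recursive (Suc (Suc (Suc k))) ?Bf"
    by (rule total_recursive_comp_drop) (use f in auto)
  then have "total_recursive (Suc (Suc (Suc k))) (\<lambda>zs. if zs ! 1 = 0
      then (if ?Bf zs = 0 then 1 else if ?Bf zs - 1 = 0 then Suc (Suc (zs ! 0)) else 0)
      else zs ! 1)"
    by (intro total_recursive_If total_recursive_diff total_recursive_Suc total_recursive_proj
        total_recursive_const) auto
  then have H: "total_recursive (Suc (Suc k)) H"
    by (rule total_recursive_prim_rec[where F = "\<lambda>_. 0", OF total_recursive_const])
      (auto simp: H_def length_Suc_conv split: option.split nat.split)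
  have "total_recursive (Suc k)
      (\<lambda>xs. H (map (\<lambda>G. G xs) [\<lambda>xs. xs ! 0, \<lambda>xs. xs ! 0] @ drop 1 xs) - 1)"
    by (intro total_recursive_diff total_recursive_const, rule total_recursive_comp_drop)
      (use H in auto)
  then show ?thesis
    by (rule total_recursive_cong) (auto simp: H_def Let_def length_Suc_conv)
qed

lemma total_recursive_eval_bounded_code: "total_recursive (Suc k) (eval_bounded_code c)"
proof (induction c arbitrary: k)
  case Z
  have "total_recursive (Suc k) (\<lambda>_. 1)" ..
  then show ?case by (rule total_recursive_cong) (simp add: eval_bounded_code_def)
next
  case Sc
  show ?case
  proof (cases k)
    case 0
    have "total_recursive (Suc k) (\<lambda>_. 0)" ..
    then show ?thesis by (rule total_recursive_cong) (auto simp: 0 length_Suc_conv)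
  next
    case (Suc k')
    have "total_recursive (Suc k) (\<lambda>xs. Suc (Suc (xs ! 1)))"
      using Suc by (intro total_recursive_Suc total_recursive_proj) simp
    then show ?thesis by (rule total_recursive_cong) (auto simp: Suc length_Suc_conv)
  qed
next
  case (Proj i)
  have "total_recursive (Suc k) (\<lambda>xs. if i < k then Suc (xs ! Suc i) else 0)"
    by (cases "i < k") (auto intro!: total_recursive_Suc total_recursive_proj)
  then show ?case by (rule total_recursive_cong) (auto simp: length_Suc_conv)
next
  case (Cn f gs)
  then show ?case by (intro total_recursive_eval_bounded_code_Cn)
next
  case (Pr f g)
  show ?case
  proof (cases k)
    case 0
    have "total_recursive (Suc k) (\<lambda>_. 0)" ..
    then show ?thesis by (rule total_recursive_cong) (auto simp: 0 length_Suc_conv)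
  next
    case (Suc k')
    then show ?thesis using Pr.IH by (simp add: total_recursive_eval_bounded_code_Pr)
  qed
next
  case (Mn f)
  then show ?case by (rule total_recursive_eval_bounded_code_Mn)
qed

section \<open>Searching in c.e. relations\<close>

lemma ce_set_as_projection:
  assumes "ce_set A"
  obtains P where "total_recursive 2 P"
    and "\<And>z. z \<in> A \<longleftrightarrow> (\<exists>s. P [s, z] \<noteq> 0)"
    and "\<And>s s' z. P [s, z] \<noteq> 0 \<Longrightarrow> s \<le> s' \<Longrightarrow> P [s', z] \<noteq> 0"
proof -
  obtain c where c: "\<And>z. z \<in> A \<longleftrightarrow> (\<exists>y. eval c [z] y)"
    using assms unfolding ce_set_def by blast
  have "total_recursive 2 (eval_bounded_code c)"
    using total_recursive_eval_bounded_code[of 1 c] by (simp add: numeral_2_eq_2)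
  moreover have "(\<exists>y. eval c [z] y) \<longleftrightarrow> (\<exists>s y. eval_bounded s c [z] = Some y)" for z
    using eval_bounded_sound eval_bounded_complete by blast
  then have "z \<in> A \<longleftrightarrow> (\<exists>s. eval_bounded_code c [s, z] \<noteq> 0)" for z
    by (simp add: c)
  moreover have "eval_bounded_code c [s', z] \<noteq> 0"
    if "eval_bounded_code c [s, z] \<noteq> 0" "s \<le> s'" for s s' z
    using that eval_bounded_mono[of s c "[z]" _ s'] by auto
  ultimately show ?thesis by (rule that)
qed

lemma computable_least_witness:
  assumes "total_recursive 2 P" and "\<And>y. \<exists>n. P [n, y] \<noteq> 0"
  obtains k where "computable k" and "\<And>y. P [k y, y] \<noteq> 0"
proof
  have "total_recursive 2 (\<lambda>xs. if P xs = 0 then 1 else 0)"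
    using assms(1) by (intro total_recursive_If total_recursive_const)
  then have "total_recursive 1 (\<lambda>xs. LEAST n. (if P (n # xs) = 0 then 1 else 0) = (0::nat))"
    using assms(2) by (intro total_recursive_minimize) (auto simp: numeral_2_eq_2 length_Suc_conv)
  then have "total_recursive 1 (\<lambda>xs. LEAST n. P [n, xs ! 0] \<noteq> 0)"
    by (rule total_recursive_cong) (auto simp: length_Suc_conv)
  then show "computable (\<lambda>y. LEAST n. P [n, y] \<noteq> 0)"
    by (simp add: computable_iff_total_recursive)
  show "P [LEAST n. P [n, y] \<noteq> 0, y] \<noteq> 0" for y
    using assms(2) by (rule LeastI_ex)
qed

lemma total_recursive_sum:
  assumes "total_recursive (Suc k) F"
  shows "total_recursive (Suc k) (\<lambda>xs. \<Sum>i<hd xs. F (i # tl xs))"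
proof (rule total_recursive_prim_rec[where F = "\<lambda>_. 0"])
  have "total_recursive (Suc (Suc k)) (\<lambda>zs. F (map (\<lambda>G. G zs) [\<lambda>zs. zs ! 0] @ drop 2 zs))"
    by (rule total_recursive_comp_drop) (use assms in auto)
  then show "total_recursive (Suc (Suc k))
      (\<lambda>zs. zs ! 1 + F (map (\<lambda>G. G zs) [\<lambda>zs. zs ! 0] @ drop 2 zs))"
    by (intro total_recursive_add total_recursive_proj) auto
qed auto

lemma computable_section_of_ce_relation:
  assumes "ce_set {prod_encode (x, y) | x y. E x y}" and h: "computable h"
    and hits: "\<And>y. \<exists>x. E (h x) y"
  obtains k where "computable k" and "\<And>y. E (h (k y)) y"
proof -
  obtain P where P: "total_recursive 2 P"
    and P_iff: "\<And>z. z \<in> {prod_encode (x, y) | x y. E x y} \<longleftrightarrow> (\<exists>s. P [s, z] \<noteq> 0)"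
    and P_mono: "\<And>s s' z. P [s, z] \<noteq> 0 \<Longrightarrow> s \<le> s' \<Longrightarrow> P [s', z] \<noteq> 0"
    using ce_set_as_projection[OF assms(1)] by blast
  define T where "T s x y = P [s, prod_encode (h x, y)]" for s x y
  have T_E: "E (h x) y \<longleftrightarrow> (\<exists>s. T s x y \<noteq> 0)" for x y
    using P_iff[of "prod_encode (h x, y)"] by (auto simp: T_def prod_encode_eq)
  have T_rec: "total_recursive 3 (\<lambda>zs. T (zs ! 1) (zs ! 0) (zs ! 2))"
    unfolding T_def
    by (rule total_recursive_comp2[OF P])
      (auto intro!: total_recursive_prod_encode total_recursive_computable[OF h])
  \<comment> \<open>Dovetailing: find a stage \<open>s\<close> at which some \<open>x < s\<close> is already confirmed.\<close>
  have "total_recursive 2 (\<lambda>xs. \<Sum>x<xs ! 0. T (xs ! 0) x (xs ! 1))"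
  proof -
    let ?S = "\<lambda>xs. \<Sum>x<hd xs. T (tl xs ! 0) x (tl xs ! 1)"
    have "total_recursive 3 ?S"
      using total_recursive_sum[OF T_rec[unfolded numeral_3_eq_3]] by (simp add: numeral_3_eq_3)
    then have "total_recursive 2 (\<lambda>xs. ?S (map (\<lambda>G. G xs) [\<lambda>xs. xs ! 0] @ drop 0 xs))"
      by (intro total_recursive_comp_drop[where m = 2]) (auto simp: numeral_3_eq_3)
    then show ?thesis by simp
  qed
  moreover have "\<exists>s. (\<Sum>x<s. T s x y) \<noteq> 0" for y
  proof -
    obtain x s where "T s x y \<noteq> 0"
      using hits[of y] T_E by auto
    then have "T (max s (Suc x)) x y \<noteq> 0"
      unfolding T_def by (rule P_mono) simp
    then show ?thesis
      by (intro exI[of _ "max s (Suc x)"]) (auto simp: sum_eq_0_iff intro!: bexI[of _ x])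
  qed
  ultimately obtain S where "computable S" and S: "\<And>y. (\<Sum>x<S y. T (S y) x y) \<noteq> 0"
    using computable_least_witness[of "\<lambda>xs. \<Sum>x<xs ! 0. T (xs ! 0) x (xs ! 1)"] by auto
  have "total_recursive 2 (\<lambda>xs. (\<lambda>zs. T (zs ! 1) (zs ! 0) (zs ! 2))
      (map (\<lambda>G. G xs) [\<lambda>xs. xs ! 0, \<lambda>xs. S (xs ! 1), \<lambda>xs. xs ! 1]))"
    by (rule total_recursive_comp)
      (use T_rec in \<open>auto simp: numeral_3_eq_3
        intro!: total_recursive_computable[OF \<open>computable S\<close>] total_recursive_proj\<close>)
  then have "total_recursive 2 (\<lambda>xs. T (S (xs ! 1)) (xs ! 0) (xs ! 1))"
    by simp
  moreover have "\<exists>x. T (S y) x y \<noteq> 0" for y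
    using S[of y] by (auto simp: sum_eq_0_iff)
  ultimately obtain k where "computable k" and k: "\<And>y. T (S y) (k y) y \<noteq> 0"
    using computable_least_witness[of "\<lambda>xs. T (S (xs ! 1)) (xs ! 0) (xs ! 1)"] by auto
  show ?thesis
    by (rule that[OF \<open>computable k\<close>]) (use k T_E in blast)
qed

section \<open>Reductions between equivalence relations\<close>

lemma IdN_iff_mod: "IdN m a b \<longleftrightarrow> a mod m = b mod m"
proof -
  have "IdN m a b \<longleftrightarrow> int a mod int m = int b mod int m"
    unfolding IdN_def by (simp add: mod_eq_dvd_iff)
  also have "\<dots> \<longleftrightarrow> a mod m = b mod m"
    by (metis of_nat_eq_iff of_nat_mod)
  finally show ?thesis .
qed

lemma funpow_preserves_reduction:
  assumes "\<And>x y. E (h x) (h y) \<longleftrightarrow> E x y"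
  shows "E ((h ^^ i) x) ((h ^^ i) y) \<longleftrightarrow> E x y"
  by (induction i) (simp_all add: assms)

lemma self_reduction_hits_every_class:
  assumes "equivp E" and "\<not> IdR \<le>\<^sub>c E" and "computable h"
    and red: "\<And>x y. E x y \<longleftrightarrow> E (h x) (h y)"
  shows "\<exists>x. E (h x) y"
proof (rule ccontr)
  assume missed: "\<nexists>x. E (h x) y"
  \<comment> \<open>The orbit of a point outside the classes hit by \<open>h\<close> meets every class at most once.\<close>
  have later: "\<not> E ((h ^^ i) y) ((h ^^ (i + Suc d)) y)" for i d
  proof -
    have "(h ^^ (i + Suc d)) y = (h ^^ i) (h ((h ^^ d) y))"
      by (simp add: funpow_add funpow_swap1)
    moreover have "\<not> E y (h ((h ^^ d) y))"
      using missed assms(1) by (meson equivp_symp)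
    ultimately show ?thesis
      by (simp add: funpow_preserves_reduction[where E = E and h = h, OF red[symmetric]])
  qed
  have "E ((h ^^ i) y) ((h ^^ j) y) \<longleftrightarrow> i = j" for i j
  proof (cases i j rule: linorder_cases)
    case less
    then show ?thesis using later[of i "j - Suc i"] by simp
  next
    case equal
    then show ?thesis using assms(1) by (simp add: equivp_reflp)
  next
    case greater
    then show ?thesis using later[of j "i - Suc j"] assms(1) by (auto dest: equivp_symp)
  qed
  then have "IdR \<le>\<^sub>c E"
    unfolding creduce_def IdR_def using computable_funpow_orbit[OF assms(3)] by blast
  with assms(2) show False ..
qed

lemma creduce_back_through_dark_ceer:
  assumes "ceer E" and "\<not> IdR \<le>\<^sub>c E" and "equivp R" and E_R: "\<And>x y. E x y \<Longrightarrow> R x y"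
    and "computable f" and T_R: "\<And>x y. T x y \<longleftrightarrow> R (f x) (f y)"
    and "E \<le>\<^sub>c (\<lambda>x y. E (f x) (f y))"
  shows "R \<le>\<^sub>c T"
proof -
  obtain g where "computable g" and g: "\<And>x y. E x y \<longleftrightarrow> E (f (g x)) (f (g y))"
    using assms(7) unfolding creduce_def by blast
  have fg: "computable (\<lambda>x. f (g x))"
    using \<open>computable f\<close> \<open>computable g\<close> by (rule computable_comp)
  have "equivp E" and ce: "ce_set {prod_encode (x, y) | x y. E x y}"
    using assms(1) unfolding ceer_def by auto
  then have "\<exists>x. E (f (g x)) y" for y
    using self_reduction_hits_every_class[OF _ assms(2) fg g] by blast
  then obtain k where "computable k" and k: "\<And>y. E (f (g (k y))) y"
    using computable_section_of_ce_relation[OF ce fg] by blast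
  have "R x y \<longleftrightarrow> T (g (k x)) (g (k y))" for x y
    using T_R E_R[OF k] assms(3) by (meson equivp_symp equivp_transp)
  then show ?thesis
    unfolding creduce_def using computable_comp[OF \<open>computable g\<close> \<open>computable k\<close>] by blast
qed

lemma equivp_finite_classes_classifier:
  fixes T :: "'a \<Rightarrow> 'a \<Rightarrow> bool"
  assumes "equivp T" and "finite (range T)"
  obtains \<phi> :: "'a \<Rightarrow> nat" and m :: nat
  where "m \<ge> 1" and "\<And>x y. T x y \<longleftrightarrow> \<phi> x = \<phi> y" and "range \<phi> = {..<m}"
proof -
  obtain b where b: "bij_betw b (range T) {0..<card (range T)}"
    using ex_bij_betw_finite_nat[OF assms(2)] by blast
  show ?thesis
  proof (rule that[of "card (range T)" "\<lambda>x. b (T x)"])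
    show "card (range T) \<ge> 1"
      using assms(2) by (simp add: Suc_le_eq card_gt_0_iff)
    show "T x y \<longleftrightarrow> b (T x) = b (T y)" for x y
      using assms(1) bij_betw_imp_inj_on[OF b] by (auto simp: equivp_def dest: inj_onD)
    show "range (\<lambda>x. b (T x)) = {..<card (range T)}"
      using bij_betw_imp_surj_on[OF b] by (auto simp: image_image)
  qed
qed

lemma cequiv_IdN_if_computable_classifier:
  assumes "computable \<phi>" and \<phi>: "\<And>x y. T x y \<longleftrightarrow> \<phi> x = \<phi> y"
    and range_\<phi>: "range \<phi> = {..<m}" and "m \<ge> 1"
  shows "T \<equiv>\<^sub>c IdN m"
proof -
  define \<psi> where "\<psi> i = (SOME x. \<phi> x = i mod m)" for i
  have "computable \<psi>"
    unfolding \<psi>_def using \<open>m \<ge> 1\<close> by (intro computable_mod_lookup) simp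
  have \<phi>_\<psi>: "\<phi> (\<psi> i) = i mod m" for i
  proof -
    have "i mod m \<in> range \<phi>"
      using range_\<phi> \<open>m \<ge> 1\<close> by simp
    then show ?thesis
      unfolding \<psi>_def by (metis (mono_tags) imageE someI)
  qed
  have "\<phi> x < m" for x
    using range_\<phi> by blast
  then have "T \<le>\<^sub>c IdN m"
    unfolding creduce_def IdN_iff_mod using \<open>computable \<phi>\<close> \<phi>
    by (intro exI[of _ \<phi>]) simp
  moreover have "IdN m \<le>\<^sub>c T"
    unfolding creduce_def IdN_iff_mod using \<open>computable \<psi>\<close> \<phi> \<phi>_\<psi>
    by (intro exI[of _ \<psi>]) auto
  ultimately show ?thesis
    unfolding cequiv_def ..
qed

lemma cequiv_IdN_coarsening:
  assumes "equivp T" and "S \<equiv>\<^sub>c IdN n" and "n \<ge> 1" and coarser: "\<And>x y. S x y \<Longrightarrow> T x y"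
  shows "\<exists>m\<ge>1. T \<equiv>\<^sub>c IdN m"
proof -
  obtain u where "computable u" and u: "\<And>x y. S x y \<longleftrightarrow> u x mod n = u y mod n"
    using assms(2) unfolding cequiv_def creduce_def IdN_iff_mod by blast
  define rep where "rep i = (SOME x. u x mod n = i)" for i
  have "u (rep (u x mod n)) mod n = u x mod n" for x
    unfolding rep_def by (rule someI[where x = x]) simp
  then have rep: "T x (rep (u x mod n))" for x
    by (metis coarser u)
  then have "T x = T (rep (u x mod n))" for x
    using assms(1) by (simp add: equivp_def)
  then have "range T \<subseteq> (\<lambda>i. T (rep i)) ` {..<n}"
    using \<open>n \<ge> 1\<close> by (auto intro!: image_eqI)
  then have "finite (range T)"
    by (rule finite_subset) simp
  then obtain m and \<phi> :: "nat \<Rightarrow> nat"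
    where "m \<ge> 1" and \<phi>: "\<And>x y. T x y \<longleftrightarrow> \<phi> x = \<phi> y" and "range \<phi> = {..<m}"
    by (rule equivp_finite_classes_classifier[OF assms(1)]) auto
  \<comment> \<open>\<open>\<phi>\<close> factors through the computable map \<open>x \<mapsto> u x mod n\<close> into a finite set.\<close>
  from \<open>n \<ge> 1\<close> have "n > 0" by simp
  have "computable (\<lambda>x. \<phi> (rep (u x mod n)))"
    using computable_comp[OF computable_mod_lookup[OF \<open>n > 0\<close>] \<open>computable u\<close>] .
  moreover have "(\<lambda>x. \<phi> (rep (u x mod n))) = \<phi>"
    by (rule ext) (metis rep \<phi>)
  ultimately have "T \<equiv>\<^sub>c IdN m"
    using cequiv_IdN_if_computable_classifier \<phi> \<open>range \<phi> = {..<m}\<close> \<open>m \<ge> 1\<close> by metis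
  with \<open>m \<ge> 1\<close> show ?thesis by blast
qed

theorem proposition2:
  fixes E R :: "nat \<Rightarrow> nat \<Rightarrow> bool"
  assumes "ceer E" and "dark E" and "minimal_er E"
    and "equivp R" and "inf_classes R"
    and "\<forall>x y. E x y \<longrightarrow> R x y"
  shows "minimal_er R"
proof -
  have "T \<equiv>\<^sub>c R \<or> (\<exists>n\<ge>1. T \<equiv>\<^sub>c IdN n)" if "equivp T" and "T \<le>\<^sub>c R" for T
  proof -
    obtain f where "computable f" and T_R: "\<And>x y. T x y \<longleftrightarrow> R (f x) (f y)"
      using \<open>T \<le>\<^sub>c R\<close> unfolding creduce_def by blast
    let ?Ef = "\<lambda>x y. E (f x) (f y)"
    have "equivp ?Ef"
      using equivp_vimage2p[of E f] assms(1) by (simp add: ceer_def vimage2p_def)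
    moreover have "?Ef \<le>\<^sub>c E"
      unfolding creduce_def using \<open>computable f\<close> by blast
    ultimately consider "?Ef \<equiv>\<^sub>c E" | n where "n \<ge> 1" and "?Ef \<equiv>\<^sub>c IdN n"
      using assms(3) unfolding minimal_er_def by blast
    then show ?thesis
    proof cases
      case 1
      then have "R \<le>\<^sub>c T"
        using creduce_back_through_dark_ceer[OF assms(1) _ assms(4) _ \<open>computable f\<close> T_R] assms(2,6)
        unfolding cequiv_def dark_def by blast
      with \<open>T \<le>\<^sub>c R\<close> show ?thesis
        unfolding cequiv_def by blast
    next
      case 2
      then show ?thesis
        using cequiv_IdN_coarsening[OF \<open>equivp T\<close>] T_R assms(6) by blast
    qed
  qed
  then show ?thesis
    using assms(5) unfolding minimal_er_def by blast
qed

end
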